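(* Let $S_2^*=(-y+x^3-xy^2)\frac{\partial}{\partial x}+(x+x^2y-y^3)\frac{\partial}{\partial y}$ and $H_{2*}(x,y)=\frac{x^2+y^2}{1+2xy}$. For $\epsilon\neq0$ let $\Phi_{2*,\epsilon}(\mathbf{x})=\mathbf{x}+2\epsilon\left(I-\epsilon\,\mathrm{D}S_2^*(\mathbf{x})\right)^{-1}S_2^*(\mathbf{x})$. Let $L_{2*}(x,y)=\left(\frac{x}{\sqrt{1+2xy}},\frac{y}{\sqrt{1+2xy}}\right)$, let $\Phi_{L,\epsilon}(u,v)=\left(\frac{(1-\epsilon^2)u-2\epsilon v}{1+\epsilon^2},\frac{2\epsilon u+(1-\epsilon^2)v}{1+\epsilon^2}\right)$, and let $\widetilde{\Phi}_{2*,\epsilon}=L_{2*}^{-1}\circ\Phi_{L,\epsilon}\circ L_{2*}$, explicitly $$\widetilde{\Phi}_{2*,\epsilon}(x,y)=\left(-\frac{((\epsilon^{2}-1)x+2\epsilon y)\,G}{(\epsilon^{2}+1)\sqrt{2xy+1}},\ \frac{(2\epsilon x+(1-\epsilon^{2})y)\,G}{(\epsilon^{2}+1)\sqrt{2xy+1}}\right),$$ $G=\sqrt{\frac{(2xy+1)(\epsilon^{2}+1)^{2}}{4\epsilon(\epsilon^{2}-1)x^{2}+16\epsilon^{2}xy-4\epsilon(\epsilon^{2}-1)y^{2}+(\epsilon^{2}+1)^{2}}}$. Then: (a) $H_{2*}$ is a first integral of $\Phi_{2*,\epsilon}$, but $S_2^*$ is not a Lie symmetry of $\Phi_{2*,\epsilon}$;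 (b) $H_{2*}$ is a first integral of $\widetilde{\Phi}_{2*,\epsilon}$, and $S_2^*$ is a Lie symmetry of $\widetilde{\Phi}_{2*,\epsilon}$.
   Context: $\mathrm{D}S_2^*$ is the Jacobian matrix of $S_2^*$. $S_2^*$ has an isochronous center at the origin and $L_{2*}$ is a linearization conjugating it near the origin with $-v\frac{\partial}{\partial u}+u\frac{\partial}{\partial v}$; $L_{2*}^{-1}$ is its local inverse. $H$ is a first integral of a map $F$ if $H\circ F=H$; a vector field $X$ is a Lie symmetry of $F$ if $X(F(\mathbf{x}))=DF(\mathbf{x})X(\mathbf{x})$. *)

theory Defs
  imports "HOL-Analysis.Analysis"
begin

definition S2 :: "real^2 \<Rightarrow> real^2" where
  "S2 p = vector [ - (p$2) + (p$1)^3 - (p$1) * (p$2)^2,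
                   (p$1) + (p$1)^2 * (p$2) - (p$2)^3 ]"

definition H2 :: "real^2 \<Rightarrow> real" where
  "H2 p = ((p$1)^2 + (p$2)^2) / (1 + 2 * (p$1) * (p$2))"

definition DS2 :: "real^2 \<Rightarrow> real^2^2" where
  "DS2 p = matrix (frechet_derivative S2 (at p))"

definition Phi2 :: "real \<Rightarrow> real^2 \<Rightarrow> real^2" where
  "Phi2 \<epsilon> p = p + (2 * \<epsilon>) *\<^sub>R (matrix_inv (mat 1 - \<epsilon> *\<^sub>R DS2 p) *v S2 p)"

definition dom_Phi2 :: "real \<Rightarrow> (real^2) set" where
  "dom_Phi2 \<epsilon> = {p. invertible (mat 1 - \<epsilon> *\<^sub>R DS2 p)
      \<and> 1 + 2 * (p$1) * (p$2) \<noteq> 0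
      \<and> 1 + 2 * (Phi2 \<epsilon> p $ 1) * (Phi2 \<epsilon> p $ 2) \<noteq> 0}"

definition G2 :: "real \<Rightarrow> real^2 \<Rightarrow> real" where
  "G2 \<epsilon> p = sqrt ((2 * (p$1) * (p$2) + 1) * (\<epsilon>^2 + 1)^2 /
      (4 * \<epsilon> * (\<epsilon>^2 - 1) * (p$1)^2 + 16 * \<epsilon>^2 * (p$1) * (p$2)
       - 4 * \<epsilon> * (\<epsilon>^2 - 1) * (p$2)^2 + (\<epsilon>^2 + 1)^2))"

text \<open>Explicit form of L2^{-1} o Phi_L o L2.\<close>
definition Phi2t :: "real \<Rightarrow> real^2 \<Rightarrow> real^2" where
  "Phi2t \<epsilon> p = vector [
     - (((\<epsilon>^2 - 1) * (p$1) + 2 * \<epsilon> * (p$2)) * G2 \<epsilon> p)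
         / ((\<epsilon>^2 + 1) * sqrt (2 * (p$1) * (p$2) + 1)),
     ((2 * \<epsilon> * (p$1) + (1 - \<epsilon>^2) * (p$2)) * G2 \<epsilon> p)
         / ((\<epsilon>^2 + 1) * sqrt (2 * (p$1) * (p$2) + 1)) ]"

definition dom_Phi2t :: "real \<Rightarrow> (real^2) set" where
  "dom_Phi2t \<epsilon> = {p. 1 + 2 * (p$1) * (p$2) > 0 \<and>
      4 * \<epsilon> * (\<epsilon>^2 - 1) * (p$1)^2 + 16 * \<epsilon>^2 * (p$1) * (p$2)
       - 4 * \<epsilon> * (\<epsilon>^2 - 1) * (p$2)^2 + (\<epsilon>^2 + 1)^2 > 0}"

definition first_integral :: "'a set \<Rightarrow> ('a \<Rightarrow> 'b) \<Rightarrow> ('a \<Rightarrow> 'a) \<Rightarrow> bool" where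
  "first_integral U H F \<longleftrightarrow> (\<forall>x\<in>U. H (F x) = H x)"

definition lie_symmetry :: "(real^2) set \<Rightarrow> (real^2 \<Rightarrow> real^2) \<Rightarrow> (real^2 \<Rightarrow> real^2) \<Rightarrow> bool" where
  "lie_symmetry U X F \<longleftrightarrow>
     (\<forall>x\<in>U. F differentiable (at x) \<and> X (F x) = matrix (frechet_derivative F (at x)) *v X x)"

end

theory Submission
  imports Defs
begin

(*
  (a) Cramer's rule for (I - eps DS2) w = S2 writes Phi2 as a quotient of polynomials, and
  H2 (Phi2 p) = H2 p becomes a polynomial identity once the denominators are cleared. The Lie
  condition already fails at p = (1, 1): multiplied by (1 + 5 eps^2)^3, the component sums of
  S2 (Phi2 p) and DPhi2(p) S2(p) differ by 1600 eps^5.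

  (b) Since L2^-1 q = q / sqrt (1 - 2 q1 q2), the conjugated map is p \<mapsto> A p / sqrt (R p), where
  A = (1 + eps^2) Phi_L is (1 + eps^2) times a rotation and
  R p = (1 + eps^2)^2 (1 + 2 x y) - 2 (A p)1 (A p)2. Hence
  H2 (A p / sqrt (R p)) = |A p|^2 / (R p + 2 (A p)1 (A p)2) = H2 p. Moreover S2 p = J p + (x^2 - y^2) p
  with J the rotation generator, which commutes with A, so the Lie condition reduces to one scalar
  polynomial identity for R.
*)

lemmas has_derivative_vec_nth [derivative_intros] =
  bounded_linear.has_derivative[OF bounded_linear_vec_nth]

lemma vector2_eq_axis: "(vector [a, b] :: real^2) = a *\<^sub>R axis 1 1 + b *\<^sub>R axis 2 1"
  by (simp add: vec_eq_iff forall_2 axis_def)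

lemma has_derivative_vector2:
  assumes "(f has_derivative f') F" "(g has_derivative g') F"
  shows "((\<lambda>p. vector [f p, g p] :: real^2) has_derivative (\<lambda>h. vector [f' h, g' h])) F"
  unfolding vector2_eq_axis by (intro has_derivative_add has_derivative_scaleR_left assms)

lemma matrix_inv_mult_vector_2:
  fixes A :: "'a::field^2^2"
  assumes "det A \<noteq> 0"
  shows "matrix_inv A *v b =
    vector [(A$2$2 * b$1 - A$1$2 * b$2) / det A, (A$1$1 * b$2 - A$2$1 * b$1) / det A]"
proof -
  have "A ** matrix_inv A = mat 1"
    using assms unfolding invertible_det_nz[symmetric] invertible_def matrix_inv_def
    by (metis (mono_tags, lifting) someI_ex)
  then have "A *v (matrix_inv A *v b) = b"
    by (simp add: matrix_vector_mul_assoc)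
  then show ?thesis
    unfolding cramer[OF assms] by (simp add: det_2 vec_eq_iff forall_2 mult.commute)
qed

lemma matrix_frechet_derivative_transform_within_open:
  fixes F G :: "real^'n \<Rightarrow> real^'n"
  assumes "(G has_derivative G') (at x)" "open U" "x \<in> U" "\<And>y. y \<in> U \<Longrightarrow> F y = G y"
  shows "F differentiable (at x)" and "matrix (frechet_derivative F (at x)) *v v = G' v"
proof -
  have F': "(F has_derivative G') (at x)"
    using has_derivative_transform_within_open[OF assms(1-3)] assms(4) by metis
  then show "F differentiable (at x)"
    by (auto simp: differentiable_def)
  show "matrix (frechet_derivative F (at x)) *v v = G' v"
    using F' by (metis frechet_derivative_at has_derivative_linear linear_matrix_vector_mul_eq matrix_works)
qed

lemma S2_nth [simp]:
  "S2 p $ 1 = - (p$2) + (p$1)^3 - (p$1) * (p$2)^2"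
  "S2 p $ 2 = (p$1) + (p$1)^2 * (p$2) - (p$2)^3"
  by (simp_all add: S2_def)

lemma S2_vector_divide:
  assumes "d \<noteq> 0"
  shows "S2 (vector [a / d, b / d]) =
    vector [(a * (a^2 - b^2) - b * d^2) / d^3, (b * (a^2 - b^2) + a * d^2) / d^3]"
  using assms by (simp add: vec_eq_iff forall_2 field_simps power2_eq_square power3_eq_cube)

lemma H2_vector_divide:
  assumes "d \<noteq> 0"
  shows "H2 (vector [a / d, b / d]) = (a^2 + b^2) / (d^2 + 2 * a * b)"
proof -
  have "H2 (vector [a / d, b / d]) = ((a^2 + b^2) / d^2) / ((d^2 + 2 * a * b) / d^2)"
    unfolding H2_def using assms by (simp add: field_simps power2_eq_square)
  then show ?thesis
    using assms by simp
qed

lemma has_derivative_S2: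
  "(S2 has_derivative (\<lambda>h. vector
     [(3 * (p$1)^2 - (p$2)^2) * h$1 - (1 + 2 * (p$1) * (p$2)) * h$2,
      (1 + 2 * (p$1) * (p$2)) * h$1 + ((p$1)^2 - 3 * (p$2)^2) * h$2])) (at p)"
  unfolding S2_def[abs_def]
  by (rule has_derivative_vector2; (rule derivative_eq_intros refl)+;
      simp add: fun_eq_iff algebra_simps power2_eq_square power3_eq_cube)

lemma DS2_nth [simp]:
  "DS2 p $ 1 $ 1 = 3 * (p$1)^2 - (p$2)^2"  "DS2 p $ 1 $ 2 = - 1 - 2 * (p$1) * (p$2)"
  "DS2 p $ 2 $ 1 = 1 + 2 * (p$1) * (p$2)"  "DS2 p $ 2 $ 2 = (p$1)^2 - 3 * (p$2)^2"
  unfolding DS2_def frechet_derivative_at[OF has_derivative_S2, symmetric]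
  by (simp_all add: matrix_def axis_def)

definition phi2_den :: "real \<Rightarrow> real \<Rightarrow> real \<Rightarrow> real" where
  "phi2_den e x y = (1 - e * (3 * x^2 - y^2)) * (1 - e * (x^2 - 3 * y^2)) + e^2 * (1 + 2 * x * y)^2"

definition phi2_num1 :: "real \<Rightarrow> real \<Rightarrow> real \<Rightarrow> real" where
  "phi2_num1 e x y = x * phi2_den e x y
     + 2 * e * ((1 - e * (x^2 - 3 * y^2)) * (- y + x^3 - x * y^2) - e * (1 + 2 * x * y) * (x + x^2 * y - y^3))"

definition phi2_num2 :: "real \<Rightarrow> real \<Rightarrow> real \<Rightarrow> real" where
  "phi2_num2 e x y = y * phi2_den e x y
     + 2 * e * ((1 - e * (3 * x^2 - y^2)) * (x + x^2 * y - y^3) + e * (1 + 2 * x * y) * (- y + x^3 - x * y^2))"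

lemma det_Phi2_matrix: "det (mat 1 - e *\<^sub>R DS2 p) = phi2_den e (p$1) (p$2)"
  by (simp add: det_2 mat_def phi2_den_def algebra_simps power2_eq_square)

lemma Phi2_eq:
  assumes "phi2_den e (p$1) (p$2) \<noteq> 0"
  shows "Phi2 e p = vector [phi2_num1 e (p$1) (p$2) / phi2_den e (p$1) (p$2),
                            phi2_num2 e (p$1) (p$2) / phi2_den e (p$1) (p$2)]"
  unfolding Phi2_def matrix_inv_mult_vector_2[of "mat 1 - e *\<^sub>R DS2 p", unfolded det_Phi2_matrix, OF assms]
  using assms by (simp add: vec_eq_iff forall_2 mat_def phi2_num1_def phi2_num2_def field_simps)

lemma H2_Phi2:
  assumes "p \<in> dom_Phi2 e"
  shows "H2 (Phi2 e p) = H2 p"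
proof -
  let ?d = "phi2_den e (p$1) (p$2)" and ?a = "phi2_num1 e (p$1) (p$2)" and ?b = "phi2_num2 e (p$1) (p$2)"
  have d: "?d \<noteq> 0" and p: "1 + 2 * (p$1) * (p$2) \<noteq> 0"
    and Phi2_p: "1 + 2 * (Phi2 e p $ 1) * (Phi2 e p $ 2) \<noteq> 0"
    using assms by (auto simp: dom_Phi2_def invertible_det_nz det_Phi2_matrix)
  have "1 + 2 * (Phi2 e p $ 1) * (Phi2 e p $ 2) = (?d^2 + 2 * ?a * ?b) / ?d^2"
    using d by (simp add: Phi2_eq field_simps power2_eq_square)
  then have ab: "?d^2 + 2 * ?a * ?b \<noteq> 0"
    using Phi2_p by auto
  have "(?a^2 + ?b^2) * (1 + 2 * (p$1) * (p$2)) = ((p$1)^2 + (p$2)^2) * (?d^2 + 2 * ?a * ?b)"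
    unfolding phi2_den_def phi2_num1_def phi2_num2_def by algebra
  then show ?thesis
    unfolding Phi2_eq[OF d] H2_vector_divide[OF d] using ab p by (simp add: H2_def frac_eq_eq)
qed

lemma phi2_at_11:
  "phi2_den e 1 1 = 1 + 5 * e^2"
  "phi2_num1 e 1 1 = 1 - 2 * e - 5 * e^2"
  "phi2_num2 e 1 1 = 1 + 2 * e - 5 * e^2"
  by (simp_all add: phi2_den_def phi2_num1_def phi2_num2_def algebra_simps power2_eq_square)

lemma has_derivative_phi2_at_11:
  "((\<lambda>q. phi2_den e (q$1) (q$2)) has_derivative
     (\<lambda>h. (4 * e^2 - 8 * e) * h$1 + (4 * e^2 + 8 * e) * h$2)) (at (vector [1, 1] :: real^2))"
  "((\<lambda>q. phi2_num1 e (q$1) (q$2)) has_derivative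
     (\<lambda>h. (1 - 4 * e - e^2) * h$1 + (2 * e - 12 * e^2) * h$2)) (at (vector [1, 1] :: real^2))"
  "((\<lambda>q. phi2_num2 e (q$1) (q$2)) has_derivative
     (\<lambda>h. (- 2 * e - 12 * e^2) * h$1 + (1 + 4 * e - e^2) * h$2)) (at (vector [1, 1] :: real^2))"
  unfolding phi2_num1_def phi2_num2_def phi2_den_def
  by ((rule derivative_eq_intros refl)+, simp add: fun_eq_iff algebra_simps power2_eq_square)+

lemma vector_11_in_dom_Phi2:
  assumes "e \<noteq> 0"
  shows "vector [1, 1] \<in> dom_Phi2 e"
proof -
  define d a b where "d = 1 + 5 * e^2" and "a = 1 - 2 * e - 5 * e^2" and "b = 1 + 2 * e - 5 * e^2"
  have d: "d > 0"
    unfolding d_def by (simp add: add_pos_nonneg)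
  have "d^2 + 2 * a * b = 3 * (1 - 3 * e^2)^2 + 48 * e^4"
    unfolding d_def a_def b_def by algebra
  then have "d^2 + 2 * a * b > 0"
    using assms by (simp add: add_nonneg_pos)
  then have "1 + 2 * (a / d) * (b / d) \<noteq> 0"
    using d by (simp add: field_simps power2_eq_square)
  then show ?thesis
    using d by (simp add: dom_Phi2_def invertible_det_nz det_Phi2_matrix Phi2_eq phi2_at_11 d_def a_def b_def)
qed

lemma Phi2_derivative_at_11:
  fixes e :: real
  defines "d \<equiv> 1 + 5 * e^2"
  shows "matrix (frechet_derivative (Phi2 e) (at (vector [1, 1]))) *v vector [- 1, 1] =
    vector [((- 1 + 6 * e - 11 * e^2) * d - 16 * e * (1 - 2 * e - 5 * e^2)) / d^2,
            ((1 + 6 * e + 11 * e^2) * d - 16 * e * (1 + 2 * e - 5 * e^2)) / d^2]"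
proof -
  define p0 :: "real^2" where "p0 = vector [1, 1]"
  define U where "U = {q::real^2. phi2_den e (q$1) (q$2) \<noteq> 0}"
  have d: "d > 0"
    unfolding d_def by (simp add: add_pos_nonneg)
  have at_p0: "phi2_den e (p0$1) (p0$2) = d"
    "phi2_num1 e (p0$1) (p0$2) = 1 - 2 * e - 5 * e^2" "phi2_num2 e (p0$1) (p0$2) = 1 + 2 * e - 5 * e^2"
    by (simp_all add: p0_def phi2_at_11 d_def)
  note D = has_derivative_phi2_at_11[where e = e, folded p0_def]
  note G' = has_derivative_vector2[OF has_derivative_divide'[OF D(2,1)] has_derivative_divide'[OF D(3,1)]]
  have "open U"
    unfolding U_def phi2_den_def by (intro open_Collect_neq continuous_intros)
  moreover have "p0 \<in> U"
    using d at_p0 by (simp add: U_def)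
  ultimately show ?thesis
    using matrix_frechet_derivative_transform_within_open(2)[OF G' \<open>open U\<close> \<open>p0 \<in> U\<close>, of "Phi2 e"] d
    unfolding at_p0 by (simp add: U_def Phi2_eq vec_eq_iff forall_2 algebra_simps power2_eq_square flip: p0_def)
qed

lemma Phi2_not_lie_symmetry:
  assumes "e \<noteq> 0"
  shows "\<not> lie_symmetry (dom_Phi2 e) S2 (Phi2 e)"
proof
  assume "lie_symmetry (dom_Phi2 e) S2 (Phi2 e)"
  then have lie: "S2 (Phi2 e (vector [1, 1])) = matrix (frechet_derivative (Phi2 e) (at (vector [1, 1]))) *v vector [- 1, 1]"
    using vector_11_in_dom_Phi2[OF assms] by (simp add: lie_symmetry_def S2_def)
  define d a b where "d = 1 + 5 * e^2" and "a = 1 - 2 * e - 5 * e^2" and "b = 1 + 2 * e - 5 * e^2"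
  define u v where "u = (- 1 + 6 * e - 11 * e^2) * d - 16 * e * a" and "v = (1 + 6 * e + 11 * e^2) * d - 16 * e * b"
  have d: "d > 0"
    unfolding d_def by (simp add: add_pos_nonneg)
  have "S2 (vector [a / d, b / d]) = vector [u / d^2, v / d^2]"
    using lie d unfolding Phi2_derivative_at_11 by (simp add: Phi2_eq phi2_at_11 a_def b_def d_def u_def v_def)
  then have "(a * (a^2 - b^2) - b * d^2) / d^3 = u / d^2" "(b * (a^2 - b^2) + a * d^2) / d^3 = v / d^2"
    using d by (simp_all add: S2_vector_divide vec_eq_iff forall_2)
  then have "a * (a^2 - b^2) - b * d^2 = d * u" "b * (a^2 - b^2) + a * d^2 = d * v"
    using d by (simp_all add: divide_eq_eq power3_eq_cube power2_eq_square)
  moreover have "(a * (a^2 - b^2) - b * d^2 - d * u) + (b * (a^2 - b^2) + a * d^2 - d * v) = - 1600 * e^5"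
    unfolding a_def b_def d_def u_def v_def by algebra
  ultimately show False
    using assms by simp
qed

(* rot_num1, rot_num2 are the components of (1 + e^2) Phi_L. *)
definition rot_num1 :: "real \<Rightarrow> real \<Rightarrow> real \<Rightarrow> real" where
  "rot_num1 e x y = (1 - e^2) * x - 2 * e * y"

definition rot_num2 :: "real \<Rightarrow> real \<Rightarrow> real \<Rightarrow> real" where
  "rot_num2 e x y = 2 * e * x + (1 - e^2) * y"

definition phi2t_radicand :: "real \<Rightarrow> real \<Rightarrow> real \<Rightarrow> real" where
  "phi2t_radicand e x y =
     4 * e * (e^2 - 1) * x^2 + 16 * e^2 * x * y - 4 * e * (e^2 - 1) * y^2 + (e^2 + 1)^2"

lemma phi2t_radicand_eq:
  "phi2t_radicand e x y = (1 + e^2)^2 * (1 + 2 * x * y) - 2 * rot_num1 e x y * rot_num2 e x y"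
  unfolding phi2t_radicand_def rot_num1_def rot_num2_def by algebra

lemma Phi2t_eq:
  assumes "p \<in> dom_Phi2t e"
  shows "Phi2t e p = vector [rot_num1 e (p$1) (p$2) / sqrt (phi2t_radicand e (p$1) (p$2)),
                             rot_num2 e (p$1) (p$2) / sqrt (phi2t_radicand e (p$1) (p$2))]"
proof -
  let ?s = "sqrt (phi2t_radicand e (p$1) (p$2))" and ?t = "sqrt (2 * (p$1) * (p$2) + 1)"
  have t: "?t > 0" and s: "?s > 0" and c: "e^2 + 1 > 0"
    using assms by (auto simp: dom_Phi2t_def phi2t_radicand_def add.commute add_pos_nonneg)
  have G: "G2 e p = ?t * (e^2 + 1) / ?s"
    unfolding G2_def phi2t_radicand_def[symmetric] by (simp add: real_sqrt_mult real_sqrt_divide)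
  have cancel: "K * G2 e p / ((e^2 + 1) * ?t) = K / ?s" for K
    unfolding G using t s c by simp
  show ?thesis
    using cancel[of "- ((e^2 - 1) * p$1 + 2 * e * p$2)"] cancel[of "2 * e * p$1 + (1 - e^2) * p$2"]
    by (simp add: Phi2t_def vec_eq_iff forall_2 rot_num1_def rot_num2_def algebra_simps)
qed

lemma H2_Phi2t:
  assumes "p \<in> dom_Phi2t e"
  shows "H2 (Phi2t e p) = H2 p"
proof -
  let ?R = "phi2t_radicand e (p$1) (p$2)"
  let ?a = "rot_num1 e (p$1) (p$2)" and ?b = "rot_num2 e (p$1) (p$2)"
  have R: "?R > 0"
    using assms by (simp add: dom_Phi2t_def phi2t_radicand_def)
  have "?a^2 + ?b^2 = (1 + e^2)^2 * ((p$1)^2 + (p$2)^2)"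
    unfolding rot_num1_def rot_num2_def by algebra
  moreover have "(sqrt ?R)^2 + 2 * ?a * ?b = (1 + e^2)^2 * (1 + 2 * (p$1) * (p$2))"
    using R by (simp add: phi2t_radicand_eq)
  moreover have "(1 + e^2)^2 \<noteq> 0"
    by (metis add_pos_nonneg power_not_zero zero_le_power2 zero_less_one less_irrefl)
  moreover have "sqrt ?R \<noteq> 0"
    using R by simp
  ultimately show ?thesis
    unfolding Phi2t_eq[OF assms] by (simp add: H2_vector_divide) (simp add: H2_def)
qed

lemma has_derivative_rot_num:
  "((\<lambda>q. rot_num1 e (q$1) (q$2)) has_derivative (\<lambda>h. rot_num1 e (h$1) (h$2))) F"
  "((\<lambda>q. rot_num2 e (q$1) (q$2)) has_derivative (\<lambda>h. rot_num2 e (h$1) (h$2))) F"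
  unfolding rot_num1_def rot_num2_def by (auto intro!: derivative_eq_intros)

lemma has_derivative_sqrt_phi2t_radicand:
  fixes p :: "real^2"
  assumes "phi2t_radicand e (p$1) (p$2) > 0"
  shows "((\<lambda>q. sqrt (phi2t_radicand e (q$1) (q$2))) has_derivative
    (\<lambda>h. ((8 * e * (e^2 - 1) * p$1 + 16 * e^2 * p$2) * h$1 + (16 * e^2 * p$1 - 8 * e * (e^2 - 1) * p$2) * h$2)
          * (inverse (sqrt (phi2t_radicand e (p$1) (p$2))) / 2))) (at p)"
proof -
  have "((\<lambda>q. phi2t_radicand e (q$1) (q$2)) has_derivative
    (\<lambda>h. (8 * e * (e^2 - 1) * p$1 + 16 * e^2 * p$2) * h$1 + (16 * e^2 * p$1 - 8 * e * (e^2 - 1) * p$2) * h$2)) (at p)"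
    unfolding phi2t_radicand_def
    by (rule derivative_eq_intros refl)+ (simp add: fun_eq_iff algebra_simps power2_eq_square)
  then show ?thesis
    by (rule DERIV_compose_FDERIV[where g = "\<lambda>q. phi2t_radicand e (q$1) (q$2)", OF DERIV_real_sqrt[OF assms]])
qed

lemma rot_num_S2:
  "rot_num1 e (S2 p $ 1) (S2 p $ 2) = - rot_num2 e (p$1) (p$2) + ((p$1)^2 - (p$2)^2) * rot_num1 e (p$1) (p$2)"
  "rot_num2 e (S2 p $ 1) (S2 p $ 2) = rot_num1 e (p$1) (p$2) + ((p$1)^2 - (p$2)^2) * rot_num2 e (p$1) (p$2)"
  unfolding rot_num1_def rot_num2_def by (simp_all add: algebra_simps power2_eq_square power3_eq_cube)

lemma phi2t_radicand_S2:
  fixes e x y :: real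
  shows "2 * phi2t_radicand e x y * (x^2 - y^2)
      - ((8 * e * (e^2 - 1) * x + 16 * e^2 * y) * (- y + x^3 - x * y^2)
         + (16 * e^2 * x - 8 * e * (e^2 - 1) * y) * (x + x^2 * y - y^3))
    = 2 * ((rot_num1 e x y)^2 - (rot_num2 e x y)^2)"
  unfolding phi2t_radicand_def rot_num1_def rot_num2_def by algebra

lemma lie_condition_phi2t_quotient:
  fixes e :: real and p :: "real^2"
  defines "R \<equiv> \<lambda>q::real^2. phi2t_radicand e (q$1) (q$2)"
  defines "G \<equiv> \<lambda>q. vector [rot_num1 e (q$1) (q$2) / sqrt (R q), rot_num2 e (q$1) (q$2) / sqrt (R q)] :: real^2"
  assumes R: "R p > 0"
  shows "\<exists>G'. (G has_derivative G') (at p) \<and> S2 (G p) = G' (S2 p)"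
proof -
  define a b s k where "a = rot_num1 e (p$1) (p$2)" and "b = rot_num2 e (p$1) (p$2)"
    and "s = sqrt (R p)" and "k = (p$1)^2 - (p$2)^2"
  define dR where "dR = (\<lambda>h::real^2. (8 * e * (e^2 - 1) * p$1 + 16 * e^2 * p$2) * h$1
                                   + (16 * e^2 * p$1 - 8 * e * (e^2 - 1) * p$2) * h$2)"
  let ?G' = "\<lambda>h. vector [(rot_num1 e (h$1) (h$2) * s - a * (dR h * (inverse s / 2))) / (s * s),
                          (rot_num2 e (h$1) (h$2) * s - b * (dR h * (inverse s / 2))) / (s * s)] :: real^2"
  have s: "s > 0" "s * s = R p"
    using R by (simp_all add: s_def)
  have "(G has_derivative ?G') (at p)"
    using has_derivative_vector2[OF has_derivative_divide'[OF has_derivative_rot_num(1) has_derivative_sqrt_phi2t_radicand]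
      has_derivative_divide'[OF has_derivative_rot_num(2) has_derivative_sqrt_phi2t_radicand]] R s
    by (simp add: G_def R_def a_def b_def s_def dR_def)
  moreover have "S2 (G p) = ?G' (S2 p)"
  proof -
    have key: "2 * (s * s) * k - dR (S2 p) = 2 * (a^2 - b^2)"
      unfolding s(2) R_def k_def dR_def a_def b_def using phi2t_radicand_S2 by simp
    have rot: "rot_num1 e (S2 p $ 1) (S2 p $ 2) = - b + k * a" "rot_num2 e (S2 p $ 1) (S2 p $ 2) = a + k * b"
      unfolding a_def b_def k_def by (rule rot_num_S2)+
    have "(a * (a^2 - b^2) - b * s^2) / s^3 = ((- b + k * a) * s - a * (dR (S2 p) * (inverse s / 2))) / (s * s)"
         "(b * (a^2 - b^2) + a * s^2) / s^3 = ((a + k * b) * s - b * (dR (S2 p) * (inverse s / 2))) / (s * s)"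
      using s(1) key by (simp_all add: field_simps power2_eq_square power3_eq_cube) algebra+
    then show ?thesis
      unfolding G_def rot a_def[symmetric] b_def[symmetric] s_def[symmetric]
      using s(1) by (simp add: S2_vector_divide vec_eq_iff forall_2)
  qed
  ultimately show ?thesis
    by blast
qed

lemma lie_symmetry_Phi2t: "lie_symmetry (dom_Phi2t e) S2 (Phi2t e)"
  unfolding lie_symmetry_def
proof
  fix p :: "real^2"
  assume p: "p \<in> dom_Phi2t e"
  then have "phi2t_radicand e (p$1) (p$2) > 0"
    by (simp add: dom_Phi2t_def phi2t_radicand_def)
  then obtain G' where G': "((\<lambda>q. vector [rot_num1 e (q$1) (q$2) / sqrt (phi2t_radicand e (q$1) (q$2)),
      rot_num2 e (q$1) (q$2) / sqrt (phi2t_radicand e (q$1) (q$2))]) has_derivative G') (at p)"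
    and lie: "S2 (Phi2t e p) = G' (S2 p)"
    using lie_condition_phi2t_quotient[of e p] unfolding Phi2t_eq[OF p] by blast
  have "open (dom_Phi2t e)"
    unfolding dom_Phi2t_def by (intro open_Collect_conj open_Collect_less continuous_intros)
  then show "Phi2t e differentiable (at p) \<and> S2 (Phi2t e p) = matrix (frechet_derivative (Phi2t e) (at p)) *v S2 p"
    using matrix_frechet_derivative_transform_within_open[OF G' _ p Phi2t_eq] lie by simp
qed

theorem proposition17:
  fixes \<epsilon> :: real
  assumes "\<epsilon> \<noteq> 0"
  shows "(first_integral (dom_Phi2 \<epsilon>) H2 (Phi2 \<epsilon>) \<and> \<not> lie_symmetry (dom_Phi2 \<epsilon>) S2 (Phi2 \<epsilon>))
       \<and> (first_integral (dom_Phi2t \<epsilon>) H2 (Phi2t \<epsilon>) \<and> lie_symmetry (dom_Phi2t \<epsilon>) S2 (Phi2t \<epsilon>))"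
  using H2_Phi2 Phi2_not_lie_symmetry[OF assms] H2_Phi2t lie_symmetry_Phi2t
  unfolding first_integral_def by blast

end
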